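(* Suppose $\mathbb{S}$ has more than one element. Then for all $x\in\mathbb{S}$ and $\lambda\ge1$: $\pi(\{x\})<P_\lambda(x,\{x\})\le\pi(\{x\})+(1-\pi(\{x\}))\frac{2\hat w}{2\hat w+\lambda-1}$, $\int_{\mathbb{S}}\pi(\{y\})\pi(dy)<\int_{\mathbb{S}}P_\lambda(y,\{y\})\pi(dy)\le\int_{\mathbb{S}}\pi(\{y\})\pi(dy)+\big(1-\int_{\mathbb{S}}\pi(\{y\})\pi(dy)\big)\frac{2\hat w}{2\hat w+\lambda-1}$, and, with $\psi(\lambda)=\frac{\int_{\mathbb{S}}[P_\lambda(y,\{y\})-\pi(\{y\})]\pi(dy)}{1-\int_{\mathbb{S}}\pi(\{y\})\pi(dy)}$, $0<\psi(\lambda)\le\frac{2\hat w}{2\hat w+\lambda-1}$ and $1<\frac{1+\psi(\lambda)}{1-\psi(\lambda)}\le\frac{4\hat w+\lambda-1}{\lambda-1}$ (the last for $\lambda>1$). All the upper bounds are asserted under the additional assumption $\hat w=\sup_xw(x)<\infty$.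
   Context: Let $\pi,q$ be probability densities with respect to a $\sigma$-finite measure $\mu$ on $(\mathbb{X},\mathcal{X})$ (singletons measurable) with $q>0$ wherever $\pi>0$; $\pi(dx)=\pi(x)\mu(dx)$, $\pi(A)=\int_A\pi(dx)$, $q(dx)=q(x)\mu(dx)$, $\mathbb{S}=\{\pi>0\}$, $w=\pi/q$ on $\mathbb{S}$ and $0$ elsewhere. For integer $N\ge1$ and $z_1\in\mathbb{S}$, $P_N(z_1,A)=\int_{\mathbb{X}^{N-1}}\sum_{i=1}^N\frac{w(z_i)}{\sum_{j=1}^Nw(z_j)}\mathbf 1\{z_i\in A\}\prod_{n=2}^Nq(dz_n)$, $P_1(z,\cdot)=\delta_z$; for real $\lambda\ge1$, $P_\lambda=\beta P_{\lfloor\lambda\rfloor}+(1-\beta)P_{\lfloor\lambda\rfloor+1}$ with $\beta=\lfloor\lambda\rfloor+1-\lambda$. *)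

theory Defs
  imports "HOL-Probability.Probability"
begin

definition iw :: "('a \<Rightarrow> real) \<Rightarrow> ('a \<Rightarrow> real) \<Rightarrow> 'a \<Rightarrow> real" where
  "iw p q x = (if p x > 0 then p x / q x else 0)"

definition dens :: "'a measure \<Rightarrow> ('a \<Rightarrow> real) \<Rightarrow> 'a measure" where
  "dens M f = density M (\<lambda>x. ennreal (f x))"

text \<open>The i-SIR kernel P_N(z, A); proposals z_2..z_N are i.i.d. q, indexed by {2..N};
  the current state z is placed at index 1.  P_1(z, .) is the Dirac mass at z.\<close>
definition PN :: "'a measure \<Rightarrow> ('a \<Rightarrow> real) \<Rightarrow> ('a \<Rightarrow> real) \<Rightarrow> nat \<Rightarrow> 'a \<Rightarrow> 'a set \<Rightarrow> real" where
  "PN M p q N z A =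
     (if N = 1 then indicator A z
      else (\<integral>zs. (let y = zs(1 := z) in
               (\<Sum>i\<in>{1..N}. iw p q (y i) / (\<Sum>j\<in>{1..N}. iw p q (y j)) * indicator A (y i)))
            \<partial>(PiM {2..N} (\<lambda>_. dens M q))))"

definition Plam :: "'a measure \<Rightarrow> ('a \<Rightarrow> real) \<Rightarrow> ('a \<Rightarrow> real) \<Rightarrow> real \<Rightarrow> 'a \<Rightarrow> 'a set \<Rightarrow> real" where
  "Plam M p q lam z A =
     (let n = nat \<lfloor>lam\<rfloor>; \<beta> = real n + 1 - lam in
        \<beta> * PN M p q n z A + (1 - \<beta>) * PN M p q (n + 1) z A)"

end

theory Submission
  imports Defs
begin

text \<open>
  For \<open>N \<ge> 2\<close> the current state \<open>a\<close> sits in slot 1 next to i.i.d. proposals \<open>Z\<^sub>2, \<dots>, Z\<^sub>N \<sim> q\<close>,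
  and \<open>P\<^sub>N(a, {a}) = E[(w a + C) / (w a + B)]\<close>, where \<open>B\<close> is the total weight of the proposals
  and \<open>C\<close> the weight of those equal to \<open>a\<close>.

  Lower bound: let \<open>S\<close> and \<open>W\<close> be the weight at \<open>a\<close> and the total weight of \<open>N\<close> i.i.d.
  particles. The slots are exchangeable and \<open>w dq = d\<pi>\<close>, so \<open>E[S\<^sup>2/W] = N \<pi>(a) P\<^sub>N(a, {a})\<close>,
  while \<open>E[S] = N \<pi>(a)\<close> and \<open>E[W] = N\<close>. Since \<open>S\<^sup>2/W \<ge> 2 \<pi>(a) S - \<pi>(a)\<^sup>2 W\<close>, strictly when all
  particles equal \<open>a\<close>, we get \<open>\<pi>(a) < P\<^sub>N(a, {a})\<close>.

  Upper bound: \<open>1 - P\<^sub>N(a, {a}) = E[A / (w a + B)]\<close> with \<open>A\<close> the proposal weight off \<open>a\<close>. The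
  tangent bound \<open>1/t \<ge> 2/K - t/K\<^sup>2\<close> at \<open>K = 2 h + N - 2\<close>, for a bound \<open>h\<close> on \<open>w\<close>, with \<open>E[A] = (N - 1)(1 - \<pi>(a))\<close>
  and \<open>E[A (w a + B)] \<le> (N - 1)(1 - \<pi>(a)) K\<close> gives \<open>1 - P\<^sub>N(a, {a}) \<ge> (N - 1)(1 - \<pi>(a)) / K\<close>.

  The bounds for \<open>P\<^sub>\<lambda>\<close> follow by interpolating between \<open>\<lfloor>\<lambda>\<rfloor>\<close> and \<open>\<lfloor>\<lambda>\<rfloor> + 1\<close>, and those for
  the integrals by integrating against \<open>\<pi>\<close>.
\<close>

section \<open>Independent copies of a probability space\<close>

lemma (in prob_space) integral_PiM_component:
  fixes f :: "'a \<Rightarrow> real"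
  assumes "k \<in> I" "f \<in> borel_measurable M"
  shows "(\<integral>\<omega>. f (\<omega> k) \<partial>PiM I (\<lambda>_. M)) = integral\<^sup>L M f"
  using integral_distr[OF measurable_component_singleton[OF assms(1)] assms(2)]
    distr_PiM_component[of I "\<lambda>_. M" k] assms prob_space_axioms by simp

lemma (in prob_space) integrable_PiM_component:
  fixes f :: "'a \<Rightarrow> real"
  assumes "k \<in> I" "integrable M f"
  shows "integrable (PiM I (\<lambda>_. M)) (\<lambda>\<omega>. f (\<omega> k))"
  using integrable_distr_eq[OF measurable_component_singleton[OF assms(1)], of f "\<lambda>_. M"]
    distr_PiM_component[of I "\<lambda>_. M" k] assms prob_space_axioms by simp

lemma (in prob_space) AE_PiM_componentD:
  assumes "k \<in> I" "{x \<in> space M. P x} \<in> sets M" "AE \<omega> in PiM I (\<lambda>_. M). P (\<omega> k)"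
  shows "AE x in M. P x"
proof -
  have "AE x in distr (PiM I (\<lambda>_. M)) M (\<lambda>\<omega>. \<omega> k). P x"
    using AE_distr_iff[OF measurable_component_singleton[OF assms(1)], of "\<lambda>_. M" P] assms by simp
  then show ?thesis
    by (subst (asm) distr_PiM_component) (use assms(1) prob_space_axioms in auto)
qed

lemma (in prob_space) integral_PiM_sum_components:
  fixes f :: "'a \<Rightarrow> real"
  assumes "finite I" "integrable M f"
  shows "(\<integral>\<omega>. (\<Sum>i\<in>I. f (\<omega> i)) \<partial>PiM I (\<lambda>_. M)) = card I * integral\<^sup>L M f"
  using assms by (simp add: integrable_PiM_component integral_PiM_component)

lemma (in prob_space) integrable_PiM_sum_components:
  fixes f :: "'a \<Rightarrow> real"
  assumes "integrable M f"
  shows "integrable (PiM I (\<lambda>_. M)) (\<lambda>\<omega>. \<Sum>i\<in>I. f (\<omega> i))"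
  using assms by (simp add: integrable_PiM_component)

lemma (in prob_space) integral_PiM_two_components:
  fixes f g :: "'a \<Rightarrow> real" and I :: "'i set"
  assumes I: "finite I" and jk: "j \<in> I" "k \<in> I" "j \<noteq> k"
    and f: "integrable M f" and g: "integrable M g"
  shows "(\<integral>\<omega>. f (\<omega> j) * g (\<omega> k) \<partial>PiM I (\<lambda>_. M)) = integral\<^sup>L M f * integral\<^sup>L M g"
proof -
  interpret product_sigma_finite "\<lambda>_. M"
    by (simp add: product_sigma_finite_def sigma_finite_measure_axioms)
  define F where "F i = (if i = j then f else if i = k then g else (\<lambda>_. 1))" for i
  have split: "(\<Prod>i\<in>I. h i) = h j * h k" if "\<And>i. i \<in> I - {j, k} \<Longrightarrow> h i = 1"
    for h :: "'i \<Rightarrow> real"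
  proof -
    have "(\<Prod>i\<in>I. h i) = h j * (h k * (\<Prod>i\<in>I - {j} - {k}. h i))"
      using I jk by (simp add: prod.remove[of I j] prod.remove[of "I - {j}" k])
    also have "(\<Prod>i\<in>I - {j} - {k}. h i) = 1"
      using that by (intro prod.neutral) auto
    finally show ?thesis by simp
  qed
  have "(\<Prod>i\<in>I. F i (\<omega> i)) = f (\<omega> j) * g (\<omega> k)" for \<omega>
    using jk split[of "\<lambda>i. F i (\<omega> i)"] by (simp add: F_def)
  then have "(\<integral>\<omega>. f (\<omega> j) * g (\<omega> k) \<partial>PiM I (\<lambda>_. M)) = (\<integral>\<omega>. (\<Prod>i\<in>I. F i (\<omega> i)) \<partial>PiM I (\<lambda>_. M))"
    by simp
  also have "\<dots> = (\<Prod>i\<in>I. integral\<^sup>L M (F i))"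
    using I f g by (intro product_integral_prod) (auto simp: F_def)
  also have "\<dots> = integral\<^sup>L M f * integral\<^sup>L M g"
    using jk split[of "\<lambda>i. integral\<^sup>L M (F i)"] by (simp add: F_def prob_space)
  finally show ?thesis .
qed

lemma (in prob_space) integral_PiM_permute:
  fixes g :: "('i \<Rightarrow> 'a) \<Rightarrow> real"
  assumes \<sigma>: "bij_betw \<sigma> I I" and g: "g \<in> borel_measurable (PiM I (\<lambda>_. M))"
  shows "(\<integral>\<omega>. g (\<lambda>i\<in>I. \<omega> (\<sigma> i)) \<partial>PiM I (\<lambda>_. M)) = (\<integral>\<omega>. g \<omega> \<partial>PiM I (\<lambda>_. M))"
proof -
  have \<sigma>I: "\<sigma> i \<in> I" if "i \<in> I" for i
    using \<sigma> that by (auto simp: bij_betw_def)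
  let ?\<Omega> = "PiM I (\<lambda>_. M)" and ?t = "\<lambda>\<omega>. \<lambda>i\<in>I. \<omega> (\<sigma> i)"
  have "distr ?\<Omega> ?\<Omega> ?t = ?\<Omega>"
    using distr_PiM_reindex[of I "\<lambda>_. M" \<sigma> I] \<sigma> prob_space_axioms
    by (simp add: bij_betw_def bij_betw_imp_funcset)
  then have "(\<integral>\<omega>. g \<omega> \<partial>?\<Omega>) = (\<integral>\<omega>. g \<omega> \<partial>distr ?\<Omega> ?\<Omega> ?t)"
    by simp
  also have "\<dots> = (\<integral>\<omega>. g (?t \<omega>) \<partial>?\<Omega>)"
    by (intro integral_distr g measurable_restrict measurable_component_singleton \<sigma>I)
  finally show ?thesis ..
qed

lemma square_div_ge_tangent:
  fixes s r W :: real
  assumes "0 \<le> s" "s \<le> W"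
  shows "2 * r * s - r\<^sup>2 * W \<le> s\<^sup>2 / W"
proof (cases "W = 0")
  case False
  then have "s\<^sup>2 / W - (2 * r * s - r\<^sup>2 * W) = (s - r * W)\<^sup>2 / W"
    by (simp add: field_simps power2_eq_square)
  moreover have "0 \<le> (s - r * W)\<^sup>2 / W"
    using assms by (intro divide_nonneg_nonneg) auto
  ultimately show ?thesis
    by linarith
qed (use assms in simp)

lemma square_div_gt_tangent:
  fixes s r W :: real
  assumes "0 < W" "s \<noteq> r * W"
  shows "2 * r * s - r\<^sup>2 * W < s\<^sup>2 / W"
proof -
  have "s\<^sup>2 / W - (2 * r * s - r\<^sup>2 * W) = (s - r * W)\<^sup>2 / W"
    using assms by (simp add: field_simps power2_eq_square)
  moreover have "0 < (s - r * W)\<^sup>2 / W"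
    using assms by (intro divide_pos_pos) auto
  ultimately show ?thesis
    by linarith
qed

lemma inverse_ge_tangent:
  fixes t K :: real
  assumes "0 < t" "0 < K"
  shows "2 / K - t / K\<^sup>2 \<le> 1 / t"
proof -
  have "(2 / K - t / K\<^sup>2) * t = 1 - (t - K)\<^sup>2 / K\<^sup>2"
    using assms by (simp add: field_simps power2_eq_square)
  also have "\<dots> \<le> 1"
    by simp
  finally show ?thesis
    using assms by (simp add: field_simps)
qed

lemma interpolated_ratio_le:
  fixes a u t :: real
  assumes "1 \<le> a" "a \<le> u" "0 \<le> t" "t < 1"
  shows "(1 - t) * (a / u) + t * (a / (u + 1)) \<le> (a + 1) / (u + 1 + t)"
proof -
  have u: "0 < u"
    using assms by simp
  have "a * (u + 1 - t) * (u + 1 + t) \<le> (a + 1) * (u * (u + 1))"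
  proof -
    have "(a + 1) * (u * (u + 1)) - a * (u + 1 - t) * (u + 1 + t) = (u + 1) * (u - a) + a * t\<^sup>2"
      by (simp add: algebra_simps power2_eq_square)
    also have "\<dots> \<ge> 0"
      using assms u by simp
    finally show ?thesis
      by simp
  qed
  then have "a * (u + 1 - t) / (u * (u + 1)) \<le> (a + 1) / (u + 1 + t)"
    using assms u by (simp add: divide_simps mult.commute mult.left_commute)
  moreover have "(1 - t) * (a / u) + t * (a / (u + 1)) = a * (u + 1 - t) / (u * (u + 1))"
    using u by (simp add: field_simps)
  ultimately show ?thesis
    by simp
qed

lemma normalized_excess_bounds:
  fixes a b f :: real
  assumes "a < 1" "a < b"
  shows "0 < (b - a) / (1 - a)"
    and "b < 1 \<Longrightarrow> (b - a) / (1 - a) < 1"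
    and "b \<le> a + (1 - a) * f \<Longrightarrow> (b - a) / (1 - a) \<le> f"
  using assms by (simp_all add: field_simps)

lemma odds_gt_1:
  fixes x :: real
  assumes "0 < x" "x < 1"
  shows "1 < (1 + x) / (1 - x)"
  using assms by (simp add: field_simps)

lemma odds_mono:
  fixes x y :: real
  assumes "0 \<le> x" "x \<le> y" "y < 1"
  shows "(1 + x) / (1 - x) \<le> (1 + y) / (1 - y)"
  using assms by (simp add: field_simps)

lemma odds_le_of_le_weight_ratio:
  fixes x h lam :: real
  assumes "0 \<le> x" "x \<le> 2 * h / (2 * h + lam - 1)" "0 \<le> h" "1 < lam"
  shows "(1 + x) / (1 - x) \<le> (4 * h + lam - 1) / (lam - 1)"
proof -
  have D: "0 < 2 * h + lam - 1"
    using assms by simp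
  have "1 + 2 * h / (2 * h + lam - 1) = (4 * h + lam - 1) / (2 * h + lam - 1)"
    and "1 - 2 * h / (2 * h + lam - 1) = (lam - 1) / (2 * h + lam - 1)"
    using D by (simp_all add: field_simps)
  moreover have "2 * h / (2 * h + lam - 1) < 1"
    using assms by simp
  ultimately show ?thesis
    using odds_mono[OF assms(1,2)] D by simp
qed

section \<open>Target, proposal and importance weight\<close>

locale isir =
  fixes M :: "'a measure" and p q :: "'a \<Rightarrow> real"
  assumes singleton_sets[measurable]: "\<And>y. {y} \<in> sets M"
    and p_measurable[measurable]: "p \<in> borel_measurable M"
    and q_measurable[measurable]: "q \<in> borel_measurable M"
    and p_nonneg: "\<And>y. p y \<ge> 0" and q_nonneg: "\<And>y. q y \<ge> 0"
    and p_integral: "(\<integral>\<^sup>+ y. ennreal (p y) \<partial>M) = 1"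
    and q_integral: "(\<integral>\<^sup>+ y. ennreal (q y) \<partial>M) = 1"
    and q_pos: "\<And>y. p y > 0 \<Longrightarrow> q y > 0"
    and target_nondegenerate: "\<And>a. measure (dens M p) ({y. p y > 0} - {a}) > 0"
begin

abbreviation "target \<equiv> dens M p"
abbreviation "proposal \<equiv> dens M q"
abbreviation "w \<equiv> iw p q"
abbreviation "proposals I \<equiv> PiM I (\<lambda>_. proposal)"
abbreviation "atom a \<equiv> measure target {a}"

lemma space_M: "space M = UNIV"
  using sets.sets_into_space[OF singleton_sets] by auto

lemma sets_proposal[measurable_cong]: "sets proposal = sets M"
  and sets_target[measurable_cong]: "sets target = sets M"
  by (simp_all add: dens_def)

lemma space_proposal[simp]: "space proposal = UNIV"
  and space_target[simp]: "space target = UNIV"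
  by (simp_all add: dens_def space_M)

lemma UNIV_sets[measurable]: "UNIV \<in> sets M"
  using sets.top[of M] by (simp add: space_M)

lemma compl_sets[measurable]: "A \<in> sets M \<Longrightarrow> - A \<in> sets M"
  using sets.compl_sets[of A M] by (simp add: space_M Compl_eq_Diff_UNIV)

lemma support_sets[measurable]: "{y. p y > 0} \<in> sets M"
proof -
  have "{y \<in> space M. p y > 0} \<in> sets M"
    by measurable
  then show ?thesis
    by (simp add: space_M)
qed

lemma w_measurable[measurable]: "w \<in> borel_measurable M"
  unfolding iw_def by measurable

lemma w_nonneg: "w y \<ge> 0"
  unfolding iw_def using p_nonneg q_nonneg by auto

lemma w_pos: "p y > 0 \<Longrightarrow> w y > 0"
  unfolding iw_def using q_pos by auto

lemma q_times_w: "q y * w y = p y"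
  using q_pos[of y] p_nonneg[of y] by (cases "p y > 0") (auto simp: iw_def)

lemma prob_space_dens:
  assumes [measurable]: "f \<in> borel_measurable M" and "(\<integral>\<^sup>+ y. ennreal (f y) \<partial>M) = 1"
  shows "prob_space (dens M f)"
proof
  have "emeasure (dens M f) (space (dens M f)) = (\<integral>\<^sup>+ y. ennreal (f y) * indicator (space M) y \<partial>M)"
    unfolding dens_def by (subst emeasure_density) auto
  then show "emeasure (dens M f) (space (dens M f)) = 1"
    using assms(2) by (simp add: space_M)
qed

sublocale proposal: prob_space proposal
  by (rule prob_space_dens) (use q_integral in auto)

sublocale target: prob_space target
  by (rule prob_space_dens) (use p_integral in auto)

sublocale proposals: product_sigma_finite "\<lambda>_. proposal"
  by unfold_locales

lemma prob_space_proposals: "prob_space (proposals J)"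
  by (intro prob_space_PiM proposal.prob_space_axioms)

lemma integrable_proposals_bounded:
  fixes f :: "(nat \<Rightarrow> 'a) \<Rightarrow> real"
  assumes "f \<in> borel_measurable (proposals J)" "\<And>y. \<bar>f y\<bar> \<le> B"
  shows "integrable (proposals J) f"
proof -
  interpret prob_space "proposals J"
    by (rule prob_space_proposals)
  show ?thesis
    using assms by (intro integrable_const_bound[where B=B]) auto
qed

lemma change_of_measure:
  assumes [measurable]: "f \<in> borel_measurable M"
  shows "(\<integral>z. w z * f z \<partial>proposal) = (\<integral>z. f z \<partial>target)"
    and "integrable proposal (\<lambda>z. w z * f z) \<longleftrightarrow> integrable target f"
proof -
  have qw: "q z * (w z * f z) = p z * f z" for z
    by (simp add: q_times_w mult.assoc[symmetric])
  show "(\<integral>z. w z * f z \<partial>proposal) = (\<integral>z. f z \<partial>target)"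
    unfolding dens_def by (simp add: integral_density q_nonneg p_nonneg qw)
  show "integrable proposal (\<lambda>z. w z * f z) \<longleftrightarrow> integrable target f"
    unfolding dens_def by (simp add: integrable_density q_nonneg p_nonneg qw)
qed

lemma integrable_w_indicator: "A \<in> sets M \<Longrightarrow> integrable proposal (\<lambda>z. w z * indicator A z)"
  by (subst change_of_measure(2)) (auto intro!: target.integrable_const_bound[where B=1])

lemma integral_w_indicator: "A \<in> sets M \<Longrightarrow> (\<integral>z. w z * indicator A z \<partial>proposal) = measure target A"
  by (subst change_of_measure(1)) auto

lemma measure_target_UNIV[simp]: "measure target UNIV = 1"
  and emeasure_target_UNIV[simp]: "emeasure target UNIV = 1"
  and measure_proposal_UNIV[simp]: "measure proposal UNIV = 1"
  using target.prob_space target.emeasure_space_1 proposal.prob_space by simp_all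

lemma integral_w: "(\<integral>z. w z \<partial>proposal) = 1"
  using integral_w_indicator[of UNIV] by simp

lemma Sup_w_bounds:
  assumes "bdd_above (range w)"
  shows "w y \<le> (SUP z. w z)" and "1 \<le> (SUP z. w z)"
proof -
  show w_le: "w y \<le> (SUP z. w z)" for y
    using assms by (intro cSUP_upper) auto
  have "(\<integral>z. w z \<partial>proposal) \<le> (\<integral>z. (SUP z. w z) \<partial>proposal)"
    using integrable_w_indicator[of UNIV] w_le by (intro integral_mono) auto
  then show "1 \<le> (SUP z. w z)"
    using integral_w by simp
qed

lemma measure_target_compl: "measure target (- {a}) = 1 - atom a"
  using target.prob_compl[of "{a}"] by (simp add: Compl_eq_Diff_UNIV)

lemma atom_less_1: "atom a < 1"
proof -
  have "atom a + measure target ({y. p y > 0} - {a}) = measure target ({a} \<union> ({y. p y > 0} - {a}))"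
    by (subst target.finite_measure_Union) auto
  also have "\<dots> \<le> 1"
    by simp
  finally show ?thesis
    using target_nondegenerate[of a] by simp
qed

lemma atom_eq: "atom a = w a * measure proposal {a}"
proof -
  have "(\<integral>z. w z * indicator {a} z \<partial>proposal) = (\<integral>z. w a * indicator {a} z \<partial>proposal)"
    by (rule Bochner_Integration.integral_cong) (auto simp: indicator_def)
  then show ?thesis
    using integral_w_indicator[of "{a}"] by simp
qed

section \<open>The kernel as an expected weight ratio\<close>

definition weight_in :: "'a set \<Rightarrow> nat set \<Rightarrow> (nat \<Rightarrow> 'a) \<Rightarrow> real" where
  "weight_in A J y = (\<Sum>j\<in>J. w (y j) * indicator A (y j))"

lemma weight_in_nonneg: "weight_in A J y \<ge> 0"
  unfolding weight_in_def by (intro sum_nonneg mult_nonneg_nonneg w_nonneg) auto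

lemma weight_in_le_total: "weight_in A J y \<le> weight_in UNIV J y"
  unfolding weight_in_def by (intro sum_mono) (auto simp: indicator_def w_nonneg)

lemma weight_in_add_compl: "weight_in A J y + weight_in (- A) J y = weight_in UNIV J y"
  unfolding weight_in_def sum.distrib[symmetric] by (intro sum.cong) (auto simp: indicator_def)

lemma weight_in_update:
  assumes "finite J" "i \<notin> J"
  shows "weight_in A (insert i J) (y(i := z)) = w z * indicator A z + weight_in A J y"
proof -
  have "(\<Sum>j\<in>J. w ((y(i := z)) j) * indicator A ((y(i := z)) j)) = weight_in A J y"
    unfolding weight_in_def using assms(2) by (intro sum.cong) auto
  then show ?thesis
    unfolding weight_in_def sum.insert[OF assms] by (simp only: fun_upd_same)
qed

lemma weight_in_permute:
  "bij_betw \<sigma> J J \<Longrightarrow> weight_in A J (\<lambda>j\<in>J. y (\<sigma> j)) = weight_in A J y"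
  unfolding weight_in_def by (subst sum.reindex_bij_betw[symmetric, where h=\<sigma>]) auto

lemma weight_in_measurable[measurable]:
  assumes [measurable]: "A \<in> sets M"
  shows "weight_in A J \<in> borel_measurable (proposals J)"
proof -
  have "(\<lambda>z. w z * indicator A z) \<in> borel_measurable proposal"
    by measurable
  then show ?thesis
    unfolding weight_in_def[abs_def] by (intro borel_measurable_sum measurable_compose[OF measurable_component_singleton])
qed

lemma weight_in_le:
  fixes h :: real
  assumes "\<And>z. w z \<le> h"
  shows "weight_in A J y \<le> card J * h"
proof -
  have "w (y j) * indicator A (y j) \<le> h" for j
    using assms[of "y j"] w_nonneg[of "y j"] by (simp add: indicator_def)
  then show ?thesis
    using sum_mono[of J "\<lambda>j. w (y j) * indicator A (y j)" "\<lambda>_. h"] by (simp add: weight_in_def)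
qed

lemma integrable_weight_in: "A \<in> sets M \<Longrightarrow> integrable (proposals J) (weight_in A J)"
  unfolding weight_in_def[abs_def]
  by (intro proposal.integrable_PiM_sum_components integrable_w_indicator)

lemma integral_weight_in:
  "finite J \<Longrightarrow> A \<in> sets M \<Longrightarrow> (\<integral>y. weight_in A J y \<partial>proposals J) = card J * measure target A"
  using proposal.integral_PiM_sum_components[OF _ integrable_w_indicator, of J A]
  by (simp add: weight_in_def integral_w_indicator)

lemma weight_ratio_nonneg: "0 \<le> weight_in A J y / weight_in UNIV J y"
  using weight_in_nonneg by simp

lemma weight_ratio_le_1: "weight_in A J y / weight_in UNIV J y \<le> 1"
  using weight_in_nonneg[of A J y] weight_in_le_total[of A J y]
  by (cases "weight_in UNIV J y = 0") auto

lemma PN_eq_weight_ratio: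
  "N \<noteq> 1 \<Longrightarrow> PN M p q N z A =
    (\<integral>zs. weight_in A {1..N} (zs(1 := z)) / weight_in UNIV {1..N} (zs(1 := z)) \<partial>proposals {2..N})"
  unfolding PN_def Let_def weight_in_def sum_divide_distrib
  by (simp add: algebra_simps)

lemma PN_nonneg: "0 \<le> PN M p q N z A"
  by (cases "N = 1") (simp add: PN_def, simp add: PN_eq_weight_ratio weight_ratio_nonneg)

lemma PN_le_1: "PN M p q N z A \<le> 1"
proof (cases "N = 1")
  case False
  let ?f = "\<lambda>zs. weight_in A {1..N} (zs(1 := z)) / weight_in UNIV {1..N} (zs(1 := z))"
  have "(\<integral>zs. ?f zs \<partial>proposals {2..N}) \<le> 1"
  proof (cases "integrable (proposals {2..N}) ?f")
    case True
    then show ?thesis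
      by (intro prob_space.integral_le_const[OF prob_space_proposals] AE_I2 weight_ratio_le_1)
  qed (simp add: not_integrable_integral_eq)
  with False show ?thesis
    by (simp add: PN_eq_weight_ratio)
qed (simp add: PN_def)

lemma PN_eq_integral:
  assumes "2 \<le> N"
  shows "PN M p q N z A = (\<integral>zs. (w z * indicator A z + weight_in A {2..N} zs) /
    (w z + weight_in UNIV {2..N} zs) \<partial>proposals {2..N})"
proof -
  have "{1..N} = insert 1 {2..N}"
    using assms by auto
  then show ?thesis
    using assms by (simp add: PN_eq_weight_ratio weight_in_update)
qed

lemma integrable_shifted_weight_ratio:
  assumes "A \<in> sets M" "0 \<le> b" "b \<le> c"
  shows "integrable (proposals J) (\<lambda>zs. (b + weight_in A J zs) / (c + weight_in UNIV J zs))"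
proof (rule integrable_proposals_bounded[where B=1])
  show "\<bar>(b + weight_in A J zs) / (c + weight_in UNIV J zs)\<bar> \<le> 1" for zs
    using assms(2,3) weight_in_nonneg[of A J zs] weight_in_le_total[of A J zs] by (auto simp: divide_le_eq_1)
qed (use assms in measurable)

lemma PN_diag_pos:
  assumes a: "p a > 0" and N: "2 \<le> N"
  shows "0 < PN M p q N a {a}"
proof -
  interpret prob_space "proposals {2..N}"
    by (rule prob_space_proposals)
  have "(\<integral>zs. 0 \<partial>proposals {2..N}) < PN M p q N a {a}"
    unfolding PN_eq_integral[OF N]
  proof (rule integral_less_AE_space)
    show "AE zs in proposals {2..N}. 0 < (w a * indicator {a} a + weight_in {a} {2..N} zs) / (w a + weight_in UNIV {2..N} zs)"
      using w_pos[OF a] weight_in_nonneg by (intro AE_I2) (simp add: add_pos_nonneg)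
  qed (use integrable_shifted_weight_ratio[of "{a}" "w a" "w a" "{2..N}"] w_nonneg in \<open>simp_all add: emeasure_space_1\<close>)
  then show ?thesis
    by simp
qed

lemma one_minus_PN_diag:
  assumes a: "p a > 0" and N: "2 \<le> N"
  shows "1 - PN M p q N a {a} =
    (\<integral>zs. weight_in (- {a}) {2..N} zs / (w a + weight_in UNIV {2..N} zs) \<partial>proposals {2..N})"
proof -
  interpret prob_space "proposals {2..N}"
    by (rule prob_space_proposals)
  let ?r = "\<lambda>zs. (w a * indicator {a} a + weight_in {a} {2..N} zs) / (w a + weight_in UNIV {2..N} zs)"
  have "integrable (proposals {2..N}) ?r"
    using integrable_shifted_weight_ratio[of "{a}" "w a" "w a" "{2..N}"] w_nonneg by simp
  moreover have "weight_in (- {a}) {2..N} zs / (w a + weight_in UNIV {2..N} zs) = 1 - ?r zs" for zs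
    using w_pos[OF a] weight_in_nonneg[of UNIV "{2..N}" zs] weight_in_add_compl[of "{a}" "{2..N}" zs]
    by (simp add: field_simps)
  ultimately show ?thesis
    using N by (simp add: PN_eq_integral prob_space)
qed

lemma measure_target_eq_0_if_AE_weight_in_eq_0:
  assumes "finite J" "j \<in> J" "A \<in> sets M" "AE y in proposals J. weight_in A J y = 0"
  shows "measure target A = 0"
proof -
  have "AE y in proposals J. w (y j) * indicator A (y j) = 0"
    using assms(4)
  proof eventually_elim
    case (elim y)
    then show ?case
      using assms(1,2) unfolding weight_in_def
      by (subst (asm) sum_nonneg_eq_0_iff) (auto simp: w_nonneg)
  qed
  moreover have "{z \<in> space proposal. w z * indicator A z = 0} \<in> sets proposal"
    using assms(3) by measurable
  ultimately have "AE z in proposal. w z * indicator A z = 0"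
    using assms(2) by (intro proposal.AE_PiM_componentD[of j J])
  then show ?thesis
    using integral_w_indicator[OF assms(3)] integral_eq_zero_AE by metis
qed

lemma PN_diag_less_1:
  assumes a: "p a > 0" and N: "2 \<le> N"
  shows "PN M p q N a {a} < 1"
proof -
  let ?g = "\<lambda>zs. weight_in (- {a}) {2..N} zs / (w a + weight_in UNIV {2..N} zs)"
  have g_nonneg: "0 \<le> ?g zs" for zs
    using w_nonneg[of a] weight_in_nonneg[of _ _ zs] by simp
  have "integrable (proposals {2..N}) ?g"
    using integrable_shifted_weight_ratio[of "- {a}" 0 "w a" "{2..N}"] w_nonneg by simp
  moreover have "(\<integral>zs. ?g zs \<partial>proposals {2..N}) \<noteq> 0"
  proof
    assume "(\<integral>zs. ?g zs \<partial>proposals {2..N}) = 0"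
    with \<open>integrable _ ?g\<close> have "AE zs in proposals {2..N}. ?g zs = 0"
      using g_nonneg by (subst (asm) integral_nonneg_eq_0_iff_AE) auto
    then have "AE zs in proposals {2..N}. weight_in (- {a}) {2..N} zs = 0"
    proof eventually_elim
      case (elim zs)
      then show ?case
        using w_pos[OF a] weight_in_nonneg[of UNIV "{2..N}" zs] by simp
    qed
    then have "measure target (- {a}) = 0"
      using N by (intro measure_target_eq_0_if_AE_weight_in_eq_0[of _ 2]) auto
    then show False
      using measure_target_compl[of a] atom_less_1[of a] by simp
  qed
  moreover have "0 \<le> (\<integral>zs. ?g zs \<partial>proposals {2..N})"
    using g_nonneg by (rule Bochner_Integration.integral_nonneg)
  ultimately show ?thesis
    using one_minus_PN_diag[OF a N] by simp
qed

section \<open>Lower bound\<close>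

lemma integrable_selection:
  assumes k: "k \<in> {1..N}"
  shows "integrable (proposals {1..N})
    (\<lambda>y. w (y k) * indicator {a} (y k) * (weight_in {a} {1..N} y / weight_in UNIV {1..N} y))"
proof (rule integrable_proposals_bounded[where B="w a"])
  have "\<bar>w (y k) * indicator {a} (y k) * r\<bar> \<le> w a" if "0 \<le> r" "r \<le> 1" for y r
    using that w_nonneg[of a] mult_left_le[of r "w a"] by (cases "y k = a") auto
  then show "\<bar>w (y k) * indicator {a} (y k) * (weight_in {a} {1..N} y / weight_in UNIV {1..N} y)\<bar> \<le> w a" for y
    using weight_ratio_nonneg weight_ratio_le_1 by blast
qed (measurable, use k in auto)

lemma integral_selection_at_first:
  assumes N: "2 \<le> N"
  shows "(\<integral>y. w (y 1) * indicator {a} (y 1) * (weight_in {a} {1..N} y / weight_in UNIV {1..N} y)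
      \<partial>proposals {1..N}) = atom a * PN M p q N a {a}"
proof -
  let ?J = "{2..N}"
  let ?R = "\<lambda>y. weight_in {a} {1..N} y / weight_in UNIV {1..N} y"
  let ?g = "\<lambda>y. w (y 1) * indicator {a} (y 1) * ?R y"
  have I: "{1..N} = insert 1 ?J"
    using N by auto
  have R_update: "?R (zs(1 := a)) = (w a + weight_in {a} ?J zs) / (w a + weight_in UNIV ?J zs)" for zs
    unfolding I by (simp add: weight_in_update)
  have "integrable (proposals {1..N}) ?g"
    using N by (intro integrable_selection) auto
  then have "(\<integral>y. ?g y \<partial>proposals {1..N}) = (\<integral>zs. (\<integral>z. ?g (zs(1 := z)) \<partial>proposal) \<partial>proposals ?J)"
    unfolding I by (intro proposals.product_integral_insert) auto
  also have "\<dots> = (\<integral>zs. atom a * ?R (zs(1 := a)) \<partial>proposals ?J)"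
  proof (rule Bochner_Integration.integral_cong[OF refl])
    fix zs
    have "(\<integral>z. ?g (zs(1 := z)) \<partial>proposal) = (\<integral>z. w z * (indicator {a} z * ?R (zs(1 := a))) \<partial>proposal)"
      by (rule Bochner_Integration.integral_cong) (auto simp: indicator_def)
    also have "\<dots> = atom a * ?R (zs(1 := a))"
      by (subst change_of_measure(1)) auto
    finally show "(\<integral>z. ?g (zs(1 := z)) \<partial>proposal) = atom a * ?R (zs(1 := a))" .
  qed
  also have "\<dots> = atom a * PN M p q N a {a}"
    unfolding R_update PN_eq_integral[OF N] by (simp only: integral_mult_right_zero indicator_simps) simp
  finally show ?thesis .
qed

lemma integral_weight_in_sq_div_total:
  assumes N: "2 \<le> N"
  shows "(\<integral>y. weight_in {a} {1..N} y ^ 2 / weight_in UNIV {1..N} y \<partial>proposals {1..N})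
    = N * (atom a * PN M p q N a {a})"
proof -
  let ?I = "{1..N}"
  let ?R = "\<lambda>y. weight_in {a} ?I y / weight_in UNIV ?I y"
  define g where "g k y = w (y k) * indicator {a} (y k) * ?R y" for k y
  have g_measurable: "g k \<in> borel_measurable (proposals ?I)" if "k \<in> ?I" for k
    unfolding g_def by (measurable, use that in auto)
  have "(\<integral>y. g k y \<partial>proposals ?I) = atom a * PN M p q N a {a}" if k: "k \<in> ?I" for k
  proof -
    have "bij_betw (Transposition.transpose 1 k) ?I ?I"
      using k by simp
    then have "(\<integral>y. g 1 (\<lambda>i\<in>?I. y (Transposition.transpose 1 k i)) \<partial>proposals ?I) = (\<integral>y. g 1 y \<partial>proposals ?I)"
      using N by (intro proposal.integral_PiM_permute g_measurable) auto
    moreover have "g 1 (\<lambda>i\<in>?I. y (Transposition.transpose 1 k i)) = g k y" for y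
      using N \<open>bij_betw _ ?I ?I\<close> by (simp add: g_def weight_in_permute)
    ultimately show ?thesis
      using integral_selection_at_first[OF N] by (simp add: g_def)
  qed
  moreover have "weight_in {a} ?I y ^ 2 / weight_in UNIV ?I y = (\<Sum>k\<in>?I. g k y)" for y
  proof -
    have "(\<Sum>k\<in>?I. g k y) = weight_in {a} ?I y * ?R y"
      unfolding g_def sum_distrib_right[symmetric] by (simp only: weight_in_def)
    then show ?thesis
      by (simp add: power2_eq_square)
  qed
  moreover have "integrable (proposals ?I) (g k)" if "k \<in> ?I" for k
    unfolding g_def using that by (rule integrable_selection)
  ultimately show ?thesis
    by (simp add: Bochner_Integration.integral_sum)
qed

lemma integrable_weight_in_sq_div_total:
  assumes "A \<in> sets M"
  shows "integrable (proposals J) (\<lambda>y. weight_in A J y ^ 2 / weight_in UNIV J y)"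
proof (rule Bochner_Integration.integrable_bound[OF integrable_weight_in[OF assms]])
  show "AE y in proposals J. norm (weight_in A J y ^ 2 / weight_in UNIV J y) \<le> norm (weight_in A J y)"
  proof (intro AE_I2)
    fix y
    have "weight_in A J y * (weight_in A J y / weight_in UNIV J y) \<le> weight_in A J y * 1"
      using weight_in_nonneg[of A J y] weight_ratio_le_1[of A J y] by (intro mult_left_mono)
    then show "norm (weight_in A J y ^ 2 / weight_in UNIV J y) \<le> norm (weight_in A J y)"
      using weight_in_nonneg[of A J y] weight_in_nonneg[of UNIV J y] by (simp add: power2_eq_square)
  qed
qed (use assms in measurable)

lemma emeasure_proposals_constant:
  fixes I :: "nat set"
  assumes "finite I" "measure proposal {a} > 0"
  shows "emeasure (proposals I) (\<Pi>\<^sub>E i\<in>I. {a}) \<noteq> 0"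
proof -
  have "emeasure (proposals I) (\<Pi>\<^sub>E i\<in>I. {a}) = (\<Prod>i\<in>I. emeasure proposal {a})"
    using assms(1) by (rule proposals.emeasure_PiM) auto
  then show ?thesis
    using assms by (simp add: proposal.emeasure_eq_measure)
qed

lemma integral_tangent_less_weight_in_sq_div_total:
  assumes a: "p a > 0" and N: "1 \<le> N" and \<pi>: "0 < atom a" "atom a < 1"
  shows "(\<integral>y. 2 * atom a * weight_in {a} {1..N} y - (atom a)\<^sup>2 * weight_in UNIV {1..N} y \<partial>proposals {1..N})
    < (\<integral>y. weight_in {a} {1..N} y ^ 2 / weight_in UNIV {1..N} y \<partial>proposals {1..N})"
proof -
  let ?I = "{1..N}" and ?\<pi> = "atom a" and ?E = "\<Pi>\<^sub>E i\<in>{1..N}. {a}"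
  let ?S = "weight_in {a} ?I" and ?W = "weight_in UNIV ?I"
  interpret prob_space "proposals ?I"
    by (rule prob_space_proposals)
  have tangent_less: "2 * ?\<pi> * ?S y - ?\<pi>\<^sup>2 * ?W y < ?S y ^ 2 / ?W y" if "y \<in> ?E" for y
  proof (rule square_div_gt_tangent)
    have "?S y = N * w a" "?W y = N * w a"
      using that by (simp_all add: weight_in_def PiE_iff)
    then show "0 < ?W y" "?S y \<noteq> ?\<pi> * ?W y"
      using w_pos[OF a] N \<pi> by simp_all
  qed
  have "measure proposal {a} > 0"
    using \<pi> atom_eq[of a] w_pos[OF a] by (simp add: zero_less_mult_iff)
  then show ?thesis
    using tangent_less emeasure_proposals_constant[of ?I a] sets_PiM_I_finite[of ?I "\<lambda>_. {a}"]
      square_div_ge_tangent[OF weight_in_nonneg weight_in_le_total]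
    by (intro integral_less_AE[where A="?E"] integrable_weight_in_sq_div_total) (auto simp: integrable_weight_in)
qed

lemma atom_less_PN_diag:
  assumes a: "p a > 0" and N: "1 \<le> N"
  shows "atom a < PN M p q N a {a}"
proof -
  consider "N = 1" | "2 \<le> N" "atom a = 0" | "2 \<le> N" "atom a \<noteq> 0"
    using N by linarith
  then show ?thesis
  proof cases
    case 1
    then show ?thesis
      using atom_less_1[of a] by (simp add: PN_def)
  next
    case 2
    then show ?thesis
      using PN_diag_pos[OF a] by simp
  next
    case 3
    let ?\<pi> = "atom a"
    have \<pi>: "0 < ?\<pi>"
      using 3(2) by (simp add: less_le)
    have "(\<integral>y. 2 * ?\<pi> * weight_in {a} {1..N} y - ?\<pi>\<^sup>2 * weight_in UNIV {1..N} y \<partial>proposals {1..N}) = N * (?\<pi> * ?\<pi>)"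
      by (simp add: integrable_weight_in integral_weight_in power2_eq_square)
    then have "N * (?\<pi> * ?\<pi>) < N * (?\<pi> * PN M p q N a {a})"
      using integral_tangent_less_weight_in_sq_div_total[OF a N \<pi> atom_less_1]
      unfolding integral_weight_in_sq_div_total[OF 3(1)] by simp
    then show ?thesis
      using 3(1) \<pi> by (simp add: mult_less_cancel_left_pos)
  qed
qed

section \<open>Upper bound\<close>

lemma w_indicator_times_w_bounded:
  fixes h :: real
  assumes h: "\<And>z. w z \<le> h"
  shows "\<bar>w u * indicator A u * w v\<bar> \<le> h * h"
proof -
  have "0 \<le> w u * indicator A u" "w u * indicator A u \<le> h"
    using w_nonneg[of u] h[of u] by (simp_all add: indicator_def)
  then show ?thesis
    using w_nonneg[of v] h[of v] by (simp add: abs_mult mult_mono')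
qed

lemma integral_weight_pair_le:
  fixes h :: real
  assumes J: "finite J" "j \<in> J" "k \<in> J" and A: "A \<in> sets M" and h: "\<And>z. w z \<le> h"
  shows "(\<integral>y. w (y j) * indicator A (y j) * w (y k) \<partial>proposals J) \<le> (if j = k then h else 1) * measure target A"
proof (cases "j = k")
  case True
  have "(\<integral>y. w (y j) * indicator A (y j) * w (y k) \<partial>proposals J) = (\<integral>z. w z * indicator A z * w z \<partial>proposal)"
    using proposal.integral_PiM_component[OF J(3), of "\<lambda>z. w z * indicator A z * w z"] True A by simp
  also have "\<dots> \<le> (\<integral>z. h * (w z * indicator A z) \<partial>proposal)"
  proof (rule integral_mono)
    show "integrable proposal (\<lambda>z. w z * indicator A z * w z)"
      using w_indicator_times_w_bounded[OF h]
      by (intro proposal.integrable_const_bound[where B="h * h"]) (use A in auto)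
    show "w z * indicator A z * w z \<le> h * (w z * indicator A z)" for z
      using h[of z] w_nonneg[of z] by (simp add: indicator_def mult_right_mono mult.commute)
  qed (use integrable_w_indicator[OF A] in simp)
  finally show ?thesis
    using True integral_w_indicator[OF A] by simp
next
  case False
  have "(\<integral>y. w (y j) * indicator A (y j) * w (y k) \<partial>proposals J)
      = (\<integral>z. w z * indicator A z \<partial>proposal) * (\<integral>z. w z \<partial>proposal)"
    using integrable_w_indicator[OF A] integrable_w_indicator[of UNIV]
    by (intro proposal.integral_PiM_two_components J False) simp_all
  then show ?thesis
    using False integral_w_indicator[OF A] integral_w by simp
qed

lemma integrable_weight_in_times_shifted_total:
  fixes h :: real
  assumes A: "A \<in> sets M" and h: "\<And>z. w z \<le> h"
  shows "integrable (proposals J) (\<lambda>y. weight_in A J y * (c + weight_in UNIV J y))"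
proof (rule integrable_proposals_bounded[where B="card J * h * (\<bar>c\<bar> + card J * h)"])
  fix y
  have "\<bar>c + weight_in UNIV J y\<bar> \<le> \<bar>c\<bar> + card J * h"
    using weight_in_nonneg[of UNIV J y] weight_in_le[OF h, of UNIV J y] by linarith
  then show "\<bar>weight_in A J y * (c + weight_in UNIV J y)\<bar> \<le> card J * h * (\<bar>c\<bar> + card J * h)"
    using weight_in_nonneg[of A J y] weight_in_le[OF h, of A J y]
    by (simp add: abs_mult mult_mono')
qed (use A in measurable)

lemma integral_weight_in_times_shifted_total_le:
  fixes h :: real
  assumes J: "finite J" and A: "A \<in> sets M" and h: "\<And>z. w z \<le> h"
  shows "(\<integral>y. weight_in A J y * (c + weight_in UNIV J y) \<partial>proposals J)
    \<le> card J * measure target A * (c + h + card J - 1)"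
proof -
  let ?pair = "\<lambda>j k y. w (y j) * indicator A (y j) * w (y k)"
  have pair_int: "integrable (proposals J) (?pair j k)" if "j \<in> J" "k \<in> J" for j k
    using w_indicator_times_w_bounded[OF h]
    by (intro integrable_proposals_bounded[where B="h * h"]) (use that A in measurable)
  have "weight_in A J y * (c + weight_in UNIV J y) = c * weight_in A J y + (\<Sum>j\<in>J. \<Sum>k\<in>J. ?pair j k y)" for y
    unfolding weight_in_def by (simp add: sum_product distrib_left)
  then have "(\<integral>y. weight_in A J y * (c + weight_in UNIV J y) \<partial>proposals J)
      = c * (card J * measure target A) + (\<Sum>j\<in>J. \<Sum>k\<in>J. \<integral>y. ?pair j k y \<partial>proposals J)"
    using J A pair_int
    by (simp add: integrable_weight_in integral_weight_in Bochner_Integration.integral_sum Bochner_Integration.integrable_sum)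
  also have "\<dots> \<le> c * (card J * measure target A) + (\<Sum>j\<in>J. \<Sum>k\<in>J. (if j = k then h else 1) * measure target A)"
    using J A h by (intro add_left_mono sum_mono integral_weight_pair_le)
  also have "(\<Sum>j\<in>J. \<Sum>k\<in>J. (if j = k then h else 1) * measure target A) = card J * measure target A * (h + card J - 1)"
  proof -
    have "(\<Sum>k\<in>J. (if j = k then h else 1) * measure target A) = (h + card J - 1) * measure target A"
      if "j \<in> J" for j
    proof -
      have "(\<Sum>k\<in>J. if j = k then h else 1) = (\<Sum>k\<in>J. 1 + (if j = k then h - 1 else 0))"
        by (rule sum.cong) auto
      then show ?thesis
        using J that by (simp add: sum.distrib sum_distrib_right[symmetric])
    qed
    then show ?thesis
      by simp
  qed
  finally show ?thesis
    by (simp add: algebra_simps)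
qed

lemma integral_weight_in_div_shifted_total_ge:
  fixes h c K :: real
  assumes A: "A \<in> sets M" and h: "\<And>z. w z \<le> h" and c: "0 < c" and K: "0 < K"
  shows "2 / K * (\<integral>y. weight_in A J y \<partial>proposals J)
      - (\<integral>y. weight_in A J y * (c + weight_in UNIV J y) \<partial>proposals J) / K\<^sup>2
    \<le> (\<integral>y. weight_in A J y / (c + weight_in UNIV J y) \<partial>proposals J)"
proof -
  have "2 / K * (\<integral>y. weight_in A J y \<partial>proposals J)
      - (\<integral>y. weight_in A J y * (c + weight_in UNIV J y) \<partial>proposals J) / K\<^sup>2
      = (\<integral>y. weight_in A J y * (2 / K - (c + weight_in UNIV J y) / K\<^sup>2) \<partial>proposals J)"
    using integrable_weight_in[OF A] integrable_weight_in_times_shifted_total[OF A h]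
    by (simp add: right_diff_distrib)
  also have "\<dots> \<le> (\<integral>y. weight_in A J y / (c + weight_in UNIV J y) \<partial>proposals J)"
  proof (rule integral_mono)
    show "weight_in A J y * (2 / K - (c + weight_in UNIV J y) / K\<^sup>2) \<le> weight_in A J y / (c + weight_in UNIV J y)" for y
      using mult_left_mono[OF inverse_ge_tangent[OF _ K] weight_in_nonneg, of "c + weight_in UNIV J y"] c
        weight_in_nonneg[of UNIV J y] by simp
  qed (use integrable_weight_in[OF A] integrable_weight_in_times_shifted_total[OF A h] c
      integrable_shifted_weight_ratio[OF A, of 0 c J] in \<open>simp_all add: right_diff_distrib\<close>)
  finally show ?thesis .
qed

lemma one_minus_PN_diag_ge:
  fixes h :: real
  assumes a: "p a > 0" and N: "2 \<le> N" and h: "\<And>z. w z \<le> h"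
  shows "(real N - 1) * (1 - atom a) / (2 * h + N - 2) \<le> 1 - PN M p q N a {a}"
proof -
  let ?J = "{2..N}"
  define K where "K = 2 * h + N - 2"
  define m where "m = (real N - 1) * (1 - atom a)"
  have c: "0 < w a" "w a \<le> h"
    using w_pos[OF a] h by auto
  then have K: "0 < K"
    using N by (simp add: K_def)
  have card: "real (card ?J) = real N - 1"
    using N by (simp add: of_nat_diff)
  have "(\<integral>y. weight_in (- {a}) ?J y * (w a + weight_in UNIV ?J y) \<partial>proposals ?J) \<le> m * (w a + h + N - 2)"
    using integral_weight_in_times_shifted_total_le[OF _ _ h, of ?J "- {a}" "w a"] card
    by (simp add: measure_target_compl m_def algebra_simps)
  also have "\<dots> \<le> m * K"
    using c atom_less_1[of a] N by (intro mult_left_mono) (simp_all add: K_def m_def)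
  finally have "(\<integral>y. weight_in (- {a}) ?J y * (w a + weight_in UNIV ?J y) \<partial>proposals ?J) / K\<^sup>2 \<le> m * K / K\<^sup>2"
    by (simp add: divide_right_mono)
  then have "2 / K * m - m * K / K\<^sup>2 \<le> 1 - PN M p q N a {a}"
    using integral_weight_in_div_shifted_total_ge[OF _ h c(1) K, of "- {a}" ?J]
      integral_weight_in[of ?J "- {a}"] card one_minus_PN_diag[OF a N]
    by (simp add: measure_target_compl m_def)
  moreover have "2 / K * m - m * K / K\<^sup>2 = m / K"
    using K by (simp add: power2_eq_square field_simps)
  ultimately show ?thesis
    by (simp add: K_def m_def)
qed

lemma PN_diag_le:
  fixes h :: real
  assumes a: "p a > 0" and N: "1 \<le> N" and h: "\<And>z. w z \<le> h" and h1: "1 \<le> h"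
  shows "PN M p q N a {a} - atom a \<le> (1 - atom a) * ((2 * h - 1) / (2 * h + N - 2))"
proof (cases "N = 1")
  case False
  then have N2: "2 \<le> N"
    using N by simp
  have "(1 - atom a) * ((2 * h - 1) / (2 * h + N - 2)) = (1 - atom a) - (real N - 1) * (1 - atom a) / (2 * h + N - 2)"
    using h1 N2 by (simp add: field_simps)
  then show ?thesis
    using one_minus_PN_diag_ge[OF a N2 h] by simp
qed (use h1 in \<open>simp add: PN_def\<close>)

section \<open>Interpolation between consecutive numbers of proposals\<close>

lemma Plam_as_combination:
  assumes "1 \<le> lam"
  obtains n \<beta> where "1 \<le> n" "0 < \<beta>" "\<beta> \<le> 1" "lam = real n + 1 - \<beta>"
    "\<And>z A. Plam M p q lam z A = \<beta> * PN M p q n z A + (1 - \<beta>) * PN M p q (n + 1) z A"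
proof
  show "1 \<le> nat \<lfloor>lam\<rfloor>" "0 < real (nat \<lfloor>lam\<rfloor>) + 1 - lam" "real (nat \<lfloor>lam\<rfloor>) + 1 - lam \<le> 1"
    using assms by linarith+
qed (simp_all add: Plam_def Let_def)

lemma Plam_nonneg: "1 \<le> lam \<Longrightarrow> 0 \<le> Plam M p q lam z A"
  by (erule Plam_as_combination) (simp add: PN_nonneg)

lemma Plam_le_1: "1 \<le> lam \<Longrightarrow> Plam M p q lam z A \<le> 1"
proof (erule Plam_as_combination)
  fix n \<beta> assume "0 < \<beta>" "\<beta> \<le> 1"
    and Plam: "\<And>z A. Plam M p q lam z A = \<beta> * PN M p q n z A + (1 - \<beta>) * PN M p q (n + 1) z A"
  then have "Plam M p q lam z A \<le> \<beta> * 1 + (1 - \<beta>) * 1"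
    unfolding Plam by (intro add_mono mult_left_mono PN_le_1) auto
  then show ?thesis
    by simp
qed

lemma atom_less_Plam_diag:
  assumes a: "p a > 0" and lam: "1 \<le> lam"
  shows "atom a < Plam M p q lam a {a}"
proof (rule Plam_as_combination[OF lam])
  fix n \<beta> assume "1 \<le> n" "0 < \<beta>" "\<beta> \<le> 1"
    and Plam: "\<And>z A. Plam M p q lam z A = \<beta> * PN M p q n z A + (1 - \<beta>) * PN M p q (n + 1) z A"
  then have "\<beta> * atom a < \<beta> * PN M p q n a {a}"
    using atom_less_PN_diag[OF a] by (intro mult_strict_left_mono) auto
  moreover have "(1 - \<beta>) * atom a \<le> (1 - \<beta>) * PN M p q (n + 1) a {a}"
    using \<open>\<beta> \<le> 1\<close> atom_less_PN_diag[OF a, of "n + 1"] by (intro mult_left_mono) auto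
  ultimately have "\<beta> * atom a + (1 - \<beta>) * atom a < Plam M p q lam a {a}"
    unfolding Plam by (rule add_less_le_mono)
  then show ?thesis
    by (simp add: algebra_simps)
qed

lemma Plam_diag_less_1:
  assumes a: "p a > 0" and lam: "1 < lam"
  shows "Plam M p q lam a {a} < 1"
proof (rule Plam_as_combination)
  fix n \<beta> assume "1 \<le> n" "0 < \<beta>" "\<beta> \<le> 1" "lam = real n + 1 - \<beta>"
    and Plam: "\<And>z A. Plam M p q lam z A = \<beta> * PN M p q n z A + (1 - \<beta>) * PN M p q (n + 1) z A"
  have "PN M p q (n + 1) a {a} < 1"
    using \<open>1 \<le> n\<close> by (intro PN_diag_less_1[OF a]) simp
  consider "\<beta> = 1" | "\<beta> < 1"
    using \<open>\<beta> \<le> 1\<close> by linarith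
  then have "\<beta> * PN M p q n a {a} + (1 - \<beta>) * PN M p q (n + 1) a {a} < \<beta> * 1 + (1 - \<beta>) * 1"
  proof cases
    case 1
    then have "PN M p q n a {a} < 1"
      using lam \<open>lam = real n + 1 - \<beta>\<close> by (intro PN_diag_less_1[OF a]) simp
    then show ?thesis
      using 1 by simp
  next
    case 2
    then show ?thesis
      using \<open>0 < \<beta>\<close> PN_le_1 \<open>PN M p q (n + 1) a {a} < 1\<close>
      by (intro add_le_less_mono mult_left_mono mult_strict_left_mono) auto
  qed
  then show ?thesis
    by (simp add: Plam)
qed (use lam in simp)

lemma Plam_diag_le:
  fixes h :: real
  assumes a: "p a > 0" and lam: "1 \<le> lam" and h: "\<And>z. w z \<le> h" and h1: "1 \<le> h"
  shows "Plam M p q lam a {a} \<le> atom a + (1 - atom a) * (2 * h / (2 * h + lam - 1))"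
proof (rule Plam_as_combination[OF lam])
  fix n \<beta> assume n: "1 \<le> n" and \<beta>: "0 < \<beta>" "\<beta> \<le> 1" and lam_eq: "lam = real n + 1 - \<beta>"
    and Plam: "\<And>z A. Plam M p q lam z A = \<beta> * PN M p q n z A + (1 - \<beta>) * PN M p q (n + 1) z A"
  let ?\<pi> = "atom a" and ?u = "2 * h + n - 2"
  have "Plam M p q lam a {a} - ?\<pi>
      = \<beta> * (PN M p q n a {a} - ?\<pi>) + (1 - \<beta>) * (PN M p q (n + 1) a {a} - ?\<pi>)"
    by (simp add: Plam algebra_simps)
  also have "\<dots> \<le> \<beta> * ((1 - ?\<pi>) * ((2 * h - 1) / ?u)) + (1 - \<beta>) * ((1 - ?\<pi>) * ((2 * h - 1) / (?u + 1)))"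
    using \<beta> n PN_diag_le[OF a _ h h1, of n] PN_diag_le[OF a _ h h1, of "n + 1"]
    by (intro add_mono mult_left_mono) (auto simp: algebra_simps)
  also have "\<dots> = (1 - ?\<pi>) * ((1 - (1 - \<beta>)) * ((2 * h - 1) / ?u) + (1 - \<beta>) * ((2 * h - 1) / (?u + 1)))"
    by (simp add: algebra_simps)
  also have "\<dots> \<le> (1 - ?\<pi>) * ((2 * h - 1 + 1) / (?u + 1 + (1 - \<beta>)))"
    using \<beta> n h1 atom_less_1[of a] by (intro mult_left_mono interpolated_ratio_le) auto
  also have "\<dots> = (1 - ?\<pi>) * (2 * h / (2 * h + lam - 1))"
    by (simp add: lam_eq algebra_simps)
  finally show ?thesis
    by simp
qed

section \<open>Integration against the target\<close>

lemma atom_measurable[measurable]: "(\<lambda>y. atom y) \<in> borel_measurable M"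
  by (rule measurable_discrete_difference[where f="\<lambda>_. 0" and X="{y. atom y \<noteq> 0}"])
    (auto simp: target.countable_support)

lemma PN_diag_measurable:
  assumes N: "1 \<le> N"
  shows "(\<lambda>y. PN M p q N y {y}) \<in> borel_measurable M"
proof (cases "N = 1")
  case False
  with N have N2: "2 \<le> N"
    by simp
  let ?J = "{2..N}"
  interpret prob_space "proposals ?J"
    by (rule prob_space_proposals)
  define f where "f y = (\<integral>zs. w y / (w y + weight_in UNIV ?J zs) \<partial>proposals ?J)" for y
  have "f \<in> borel_measurable M"
    unfolding f_def by (rule borel_measurable_lebesgue_integral) measurable
  then show ?thesis
  proof (rule measurable_discrete_difference[OF _ proposal.countable_support])
    fix y assume "y \<notin> {y. measure proposal {y} \<noteq> 0}"
    then have "{y} \<in> null_sets proposal"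
      by (simp add: proposal.emeasure_eq_measure null_sets_def)
    then have "AE z in proposal. z \<noteq> y"
      using AE_not_in by fastforce
    then have "AE zs in proposals ?J. \<forall>j\<in>?J. zs j \<noteq> y"
      by (intro AE_finite_allI AE_PiM_component) (auto intro: proposal.prob_space_axioms)
    then have "AE zs in proposals ?J. w y / (w y + weight_in UNIV ?J zs)
        = (w y * indicator {y} y + weight_in {y} ?J zs) / (w y + weight_in UNIV ?J zs)"
      by eventually_elim (simp add: weight_in_def)
    then show "f y = PN M p q N y {y}"
      unfolding f_def PN_eq_integral[OF N2] by (intro integral_cong_AE) auto
  qed auto
qed (simp add: PN_def)

lemma Plam_diag_measurable:
  assumes "1 \<le> lam"
  shows "(\<lambda>y. Plam M p q lam y {y}) \<in> borel_measurable M"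
proof (rule Plam_as_combination[OF assms])
  fix n \<beta> assume "1 \<le> n"
    and Plam: "\<And>z A. Plam M p q lam z A = \<beta> * PN M p q n z A + (1 - \<beta>) * PN M p q (n + 1) z A"
  then show ?thesis
    unfolding Plam using PN_diag_measurable[of n] PN_diag_measurable[of "n + 1"] by simp
qed

lemma AE_support: "AE y in target. p y > 0"
  unfolding dens_def by (subst AE_density) auto

lemma set_integral_support:
  fixes f :: "'a \<Rightarrow> real"
  assumes "f \<in> borel_measurable M"
  shows "(\<integral>y\<in>{y. p y > 0}. f y \<partial>target) = (\<integral>y. f y \<partial>target)"
  unfolding set_lebesgue_integral_def
proof (rule integral_cong_AE)
  show "AE y in target. indicator {y. p y > 0} y *\<^sub>R f y = f y"
    using AE_support by eventually_elim simp
qed (use assms in measurable)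

lemma borel_measurable_target_iff: "f \<in> borel_measurable target \<longleftrightarrow> f \<in> borel_measurable M"
  by (simp add: measurable_cong_sets[OF sets_target refl])

lemma integrable_atom: "integrable target (\<lambda>y. atom y)"
  by (rule target.integrable_const_bound[where B=1])
    (auto simp: less_imp_le[OF atom_less_1] borel_measurable_target_iff)

lemma integrable_Plam_diag: "1 \<le> lam \<Longrightarrow> integrable target (\<lambda>y. Plam M p q lam y {y})"
  by (rule target.integrable_const_bound[where B=1])
    (auto simp: Plam_nonneg Plam_le_1 Plam_diag_measurable borel_measurable_target_iff)

lemma integral_atom_less_1: "(\<integral>y. atom y \<partial>target) < 1"
proof -
  have "(\<integral>y. atom y \<partial>target) < (\<integral>y. 1 \<partial>target)"
    using atom_less_1 by (intro target.integral_less_AE_space integrable_atom) auto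
  then show ?thesis
    by simp
qed

lemma integral_atom_less_integral_Plam_diag:
  assumes lam: "1 \<le> lam"
  shows "(\<integral>y. atom y \<partial>target) < (\<integral>y. Plam M p q lam y {y} \<partial>target)"
proof (intro target.integral_less_AE_space integrable_atom integrable_Plam_diag lam)
  show "AE y in target. atom y < Plam M p q lam y {y}"
    using AE_support by eventually_elim (rule atom_less_Plam_diag[OF _ lam])
qed simp

lemma integral_Plam_diag_less_1:
  assumes lam: "1 < lam"
  shows "(\<integral>y. Plam M p q lam y {y} \<partial>target) < 1"
proof -
  have "AE y in target. Plam M p q lam y {y} < 1"
    using AE_support by eventually_elim (rule Plam_diag_less_1[OF _ lam])
  then have "(\<integral>y. Plam M p q lam y {y} \<partial>target) < (\<integral>y. 1 \<partial>target)"
    using lam by (intro target.integral_less_AE_space integrable_Plam_diag) auto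
  then show ?thesis
    by simp
qed

lemma integral_Plam_diag_le:
  fixes h :: real
  assumes lam: "1 \<le> lam" and h: "\<And>z. w z \<le> h" and h1: "1 \<le> h"
  defines "f \<equiv> 2 * h / (2 * h + lam - 1)"
  shows "(\<integral>y. Plam M p q lam y {y} \<partial>target) \<le> (\<integral>y. atom y \<partial>target) + (1 - (\<integral>y. atom y \<partial>target)) * f"
proof -
  have "(\<integral>y. Plam M p q lam y {y} \<partial>target) \<le> (\<integral>y. atom y + (1 - atom y) * f \<partial>target)"
  proof (intro integral_mono_AE integrable_Plam_diag lam)
    show "AE y in target. Plam M p q lam y {y} \<le> atom y + (1 - atom y) * f"
      using AE_support by eventually_elim (unfold f_def, rule Plam_diag_le[OF _ lam h h1])
  qed (use integrable_atom in simp)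
  also have "\<dots> = (\<integral>y. atom y \<partial>target) + (1 - (\<integral>y. atom y \<partial>target)) * f"
    using integrable_atom by (simp add: algebra_simps)
  finally show ?thesis .
qed

end

theorem lemma8p4:
  fixes M :: "'a measure" and p q :: "'a \<Rightarrow> real" and x :: 'a and lam :: real
  assumes sf: "sigma_finite_measure M"
    and sing: "\<And>y. {y} \<in> sets M"
    and p_meas: "p \<in> borel_measurable M" and q_meas: "q \<in> borel_measurable M"
    and p_nn: "\<And>y. p y \<ge> 0" and q_nn: "\<And>y. q y \<ge> 0"
    and p_int: "(\<integral>\<^sup>+ y. ennreal (p y) \<partial>M) = 1"
    and q_int: "(\<integral>\<^sup>+ y. ennreal (q y) \<partial>M) = 1"
    and q_pos: "\<And>y. p y > 0 \<Longrightarrow> q y > 0"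
    and nondeg: "\<And>a. measure (dens M p) ({y. p y > 0} - {a}) > 0"
    and x_in: "p x > 0"
    and lam: "lam \<ge> 1"
  defines "I0 \<equiv> (\<integral>y\<in>{y. p y > 0}. measure (dens M p) {y} \<partial>(dens M p))"
    and "I \<equiv> (\<integral>y\<in>{y. p y > 0}. Plam M p q lam y {y} \<partial>(dens M p))"
    and "\<psi> \<equiv> ((\<integral>y\<in>{y. p y > 0}. (Plam M p q lam y {y} - measure (dens M p) {y}) \<partial>(dens M p)) / (1 - (\<integral>y\<in>{y. p y > 0}. measure (dens M p) {y} \<partial>(dens M p))))"
    and "wh \<equiv> (SUP y. iw p q y)"
  shows "measure (dens M p) {x} < Plam M p q lam x {x}
    \<and> I0 < I
    \<and> 0 < \<psi>
    \<and> (lam > 1 \<longrightarrow> 1 < (1 + \<psi>) / (1 - \<psi>))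
    \<and> (bdd_above (range (iw p q)) \<longrightarrow>
          Plam M p q lam x {x} \<le> measure (dens M p) {x} + (1 - measure (dens M p) {x}) * (2 * wh / (2 * wh + lam - 1))
        \<and> I \<le> I0 + (1 - I0) * (2 * wh / (2 * wh + lam - 1))
        \<and> \<psi> \<le> 2 * wh / (2 * wh + lam - 1)
        \<and> (lam > 1 \<longrightarrow> (1 + \<psi>) / (1 - \<psi>) \<le> (4 * wh + lam - 1) / (lam - 1)))"
proof -
  interpret isir M p q
    using assms by unfold_locales auto
  have I0_eq: "I0 = (\<integral>y. atom y \<partial>target)" and I_eq: "I = (\<integral>y. Plam M p q lam y {y} \<partial>target)"
    unfolding I0_def I_def using Plam_diag_measurable[OF lam] by (simp_all add: set_integral_support)
  have \<psi>_eq: "\<psi> = (I - I0) / (1 - I0)"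
    unfolding \<psi>_def I0_def[symmetric] I_eq I0_eq using Plam_diag_measurable[OF lam] integrable_atom
      integrable_Plam_diag[OF lam] by (simp add: set_integral_support)
  have I0_less: "I0 < 1" "I0 < I"
    unfolding I0_eq I_eq using integral_atom_less_1 integral_atom_less_integral_Plam_diag[OF lam] .
  note \<psi>_bounds = normalized_excess_bounds[OF I0_less, folded \<psi>_eq]
  have upper: "Plam M p q lam x {x} \<le> atom x + (1 - atom x) * (2 * wh / (2 * wh + lam - 1))"
    "I \<le> I0 + (1 - I0) * (2 * wh / (2 * wh + lam - 1))" if "bdd_above (range w)"
    using Plam_diag_le[OF x_in lam] integral_Plam_diag_le[OF lam] Sup_w_bounds[OF that]
    unfolding I0_eq I_eq wh_def by auto
  have \<psi>_le: "\<psi> \<le> 2 * wh / (2 * wh + lam - 1)" if "bdd_above (range w)"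
    using \<psi>_bounds(3) upper(2)[OF that] .
  have odds_le: "(1 + \<psi>) / (1 - \<psi>) \<le> (4 * wh + lam - 1) / (lam - 1)" if "bdd_above (range w)" "1 < lam"
    using odds_le_of_le_weight_ratio[OF less_imp_le[OF \<psi>_bounds(1)] \<psi>_le[OF that(1)] _ that(2)]
      Sup_w_bounds(2)[OF that(1)] unfolding wh_def by simp
  show ?thesis
    using atom_less_Plam_diag[OF x_in lam] I0_less(2) \<psi>_bounds(1) upper \<psi>_le odds_le
      odds_gt_1[OF \<psi>_bounds(1) \<psi>_bounds(2)] integral_Plam_diag_less_1[of lam, folded I_eq]
    by auto
qed

end
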